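(* Let $\alpha=(a_1,\ldots,a_k)$ be a composition of a non-negative integer $n$. Then \[(\zeta^{-1})_-(M_\alpha)=\begin{cases}\dfrac{(-1)^{k(\alpha)}}{2^{2\lfloor k_o(\alpha)/2\rfloor}}\,C\bigl(0,\lfloor k_o(\alpha)/2\rfloor\bigr)&\text{if } a_1\text{ is odd},\\ 0&\text{if } a_1\text{ is even},\end{cases}\] \[(\zeta^{-1})_+(M_\alpha)=\begin{cases}\dfrac{(-1)^{k(\alpha)}}{2^{k_o(\alpha)}}\,C\bigl(0,k_o(\alpha)/2\bigr)&\text{if } n\text{ is even},\\0&\text{if } n\text{ is odd.}\end{cases}\]
   Context: $\Bbbk$ is a field of characteristic $\neq2$. A composition $\alpha=(a_1,\ldots,a_k)$ of $n$ is a sequence of positive integers with sum $n$; $k(\alpha)=k$, and $k_o(\alpha)$, $k_e(\alpha)$ are the numbers of odd and even parts. ${\mathcal{Q}Sym}$ is the graded connected Hopf algebra of quasi-symmetric functions over $\Bbbk$ with monomial basis $M_\alpha=\sum_{i_1<\cdots<i_k}x_{i_1}^{a_1}\cdots x_{i_k}^{a_k}$ ($M_{()}=1$), ordinary product, coproduct $\Delta(M_\alpha)=\sum_{i=0}^kM_{(a_1,\ldots,a_i)}\otimes M_{(a_{i+1},\ldots,a_k)}$. Convolution $\rho\psi=m\circ(\rho\otimes\psi)\circ\Delta$; characters (algebra morphisms to $\Bbbk$) form a group under convolution. For a functional $\varphi$, $\bar\varphi(h)=(-1)^n\varphi(h)$ on homogeneous $h$ of degree $n$; $\varphi$ is even if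 $\bar\varphi=\varphi$, odd if $\bar\varphi=\varphi^{-1}$. Every character $\varphi$ factors uniquely as $\varphi=\varphi_+\varphi_-$ with $\varphi_+$ an even and $\varphi_-$ an odd character. $\zeta$ is the universal character $\zeta(f)=f(1,0,0,\ldots)$ ($\zeta(M_\alpha)=1$ if $\alpha=()$ or $\alpha=(n)$, else $0$), $\zeta^{-1}$ its convolution inverse, and $(\zeta^{-1})_+,(\zeta^{-1})_-$ the even and odd parts of $\zeta^{-1}$. $C(p,q)=\frac{(2p)!(2q)!}{p!(p+q)!q!}$. *)

theory Defs
  imports Main
begin

text \<open>A (linear) functional on QSym is
represented by its values on the monomial basis, i.e. a function on compositions;
we require it to vanish on lists that are not compositions so that functionals
are determined by their values on the basis M_alpha.\<close>

definition is_comp :: "nat list \<Rightarrow> bool" where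
  "is_comp \<alpha> \<longleftrightarrow> (\<forall>a\<in>set \<alpha>. 0 < a)"

definition functional :: "(nat list \<Rightarrow> 'a::field) \<Rightarrow> bool" where
  "functional \<phi> \<longleftrightarrow> (\<forall>\<alpha>. \<not> is_comp \<alpha> \<longrightarrow> \<phi> \<alpha> = 0)"

text \<open>Quasi-shuffle (stuffle) product: M_alpha * M_beta = sum over the list qsh alpha beta.\<close>
fun qsh :: "nat list \<Rightarrow> nat list \<Rightarrow> nat list list" where
  "qsh [] \<beta> = [\<beta>]"
| "qsh \<alpha> [] = [\<alpha>]"
| "qsh (a # \<alpha>) (b # \<beta>) =
     map ((#) a) (qsh \<alpha> (b # \<beta>)) @ map ((#) b) (qsh (a # \<alpha>) \<beta>) @ map ((#) (a + b)) (qsh \<alpha> \<beta>)"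

definition character :: "(nat list \<Rightarrow> 'a::field) \<Rightarrow> bool" where
  "character \<phi> \<longleftrightarrow> functional \<phi> \<and> \<phi> [] = 1 \<and>
     (\<forall>\<alpha> \<beta>. is_comp \<alpha> \<longrightarrow> is_comp \<beta> \<longrightarrow> \<phi> \<alpha> * \<phi> \<beta> = sum_list (map \<phi> (qsh \<alpha> \<beta>)))"

definition conv :: "(nat list \<Rightarrow> 'a::field) \<Rightarrow> (nat list \<Rightarrow> 'a) \<Rightarrow> nat list \<Rightarrow> 'a" where
  "conv \<rho> \<psi> \<alpha> = (if is_comp \<alpha> then (\<Sum>i\<le>length \<alpha>. \<rho> (take i \<alpha>) * \<psi> (drop i \<alpha>)) else 0)"

definition counit :: "nat list \<Rightarrow> 'a::field" where
  "counit \<alpha> = (if \<alpha> = [] then 1 else 0)"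

definition conv_inv :: "(nat list \<Rightarrow> 'a::field) \<Rightarrow> nat list \<Rightarrow> 'a" where
  "conv_inv \<phi> = (THE \<psi>. functional \<psi> \<and> conv \<phi> \<psi> = counit \<and> conv \<psi> \<phi> = counit)"

definition bar :: "(nat list \<Rightarrow> 'a::field) \<Rightarrow> nat list \<Rightarrow> 'a" where
  "bar \<phi> \<alpha> = (-1) ^ sum_list \<alpha> * \<phi> \<alpha>"

definition even_fn :: "(nat list \<Rightarrow> 'a::field) \<Rightarrow> bool" where
  "even_fn \<phi> \<longleftrightarrow> bar \<phi> = \<phi>"

definition odd_fn :: "(nat list \<Rightarrow> 'a::field) \<Rightarrow> bool" where
  "odd_fn \<phi> \<longleftrightarrow> conv (bar \<phi>) \<phi> = counit \<and> conv \<phi> (bar \<phi>) = counit"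

definition even_odd_factors :: "(nat list \<Rightarrow> 'a::field) \<Rightarrow> (nat list \<Rightarrow> 'a) \<times> (nat list \<Rightarrow> 'a)" where
  "even_odd_factors \<phi> = (THE (p, m). character p \<and> character m \<and> even_fn p \<and> odd_fn m \<and> conv p m = \<phi>)"

definition even_part :: "(nat list \<Rightarrow> 'a::field) \<Rightarrow> nat list \<Rightarrow> 'a" where
  "even_part \<phi> = fst (even_odd_factors \<phi>)"

definition odd_part :: "(nat list \<Rightarrow> 'a::field) \<Rightarrow> nat list \<Rightarrow> 'a" where
  "odd_part \<phi> = snd (even_odd_factors \<phi>)"

text \<open>Universal character zeta(f) = f(1,0,0,...).\<close>
definition zeta :: "nat list \<Rightarrow> 'a::field" where
  "zeta \<alpha> = (if is_comp \<alpha> \<and> length \<alpha> \<le> 1 then 1 else 0)"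

definition k_odd :: "nat list \<Rightarrow> nat" where
  "k_odd \<alpha> = length (filter odd \<alpha>)"

definition k_even :: "nat list \<Rightarrow> nat" where
  "k_even \<alpha> = length (filter even \<alpha>)"

text \<open>C(p,q) = (2p)!(2q)!/(p!(p+q)!q!), an integer (super Catalan number), mapped into the field.\<close>
definition Ccoef :: "nat \<Rightarrow> nat \<Rightarrow> 'a::field" where
  "Ccoef p q = of_nat ((fact (2*p) * fact (2*q)) div (fact p * fact (p+q) * fact q))"

end

theory Submission
  imports Defs "HOL-Computational_Algebra.Formal_Power_Series"
begin

(*
  Both factors of zeta^{-1} depend only on the length k of alpha, its number k_o of odd parts
  and the parity of its first part. For a power series f let V_f(alpha) = (-1)^k f_{k_o}, and
  let W_f be V_f restricted to compositions with odd first part. Then V_f W_g = V_{fg},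
  W_f W_g = W_{fg}, W_1 is the counit, and bar turns f(x) into f(-x).

  Now zeta^{-1} = V_{1/(1-x)} and bar(zeta) zeta^{-1} = W_{(1+x)/(1-x)}. Let P = (1-x^2)^{-1/2},
  whose coefficient of x^{2q} is binom(2q,q)/4^q by the Vandermonde identity for binom(-1/2, -).
  The candidate odd factor m = W_{(1+x)P} squares to the character bar(zeta) zeta^{-1}, hence is
  a character itself: square roots of characters are unique when 2 is invertible. Its inverse
  bar(m) = W_{(1-x)P} shows that m is odd, and p = zeta^{-1} bar(m) = V_P is an even character
  with p m = zeta^{-1}. Such a factorization being unique, p and m are the even and odd parts.
*)

unbundle fps_syntax

lemma is_comp_Nil [simp]: "is_comp []"
  by (simp add: is_comp_def)

lemma is_comp_Cons [simp]: "is_comp (a # \<alpha>) \<longleftrightarrow> 0 < a \<and> is_comp \<alpha>"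
  by (simp add: is_comp_def)

lemma is_comp_append [simp]: "is_comp (\<alpha> @ \<beta>) \<longleftrightarrow> is_comp \<alpha> \<and> is_comp \<beta>"
  by (auto simp add: is_comp_def)

lemma is_comp_take [intro]: "is_comp \<alpha> \<Longrightarrow> is_comp (take i \<alpha>)"
  by (auto simp add: is_comp_def dest: in_set_takeD)

lemma is_comp_drop [intro]: "is_comp \<alpha> \<Longrightarrow> is_comp (drop i \<alpha>)"
  by (auto simp add: is_comp_def dest: in_set_dropD)

lemma k_odd_Nil [simp]: "k_odd [] = 0"
  by (simp add: k_odd_def)

lemma k_odd_Cons [simp]: "k_odd (a # \<alpha>) = (if odd a then Suc (k_odd \<alpha>) else k_odd \<alpha>)"
  by (simp add: k_odd_def)

lemma even_sum_list_iff_even_k_odd: "even (sum_list \<alpha>) \<longleftrightarrow> even (k_odd \<alpha>)"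
  by (induction \<alpha>) auto

lemma neg_one_power_sum_list: "(-1 :: 'a::ring_1) ^ sum_list \<alpha> = (-1) ^ k_odd \<alpha>"
  by (metis even_sum_list_iff_even_k_odd neg_one_even_power neg_one_odd_power)

subsection \<open>Convolution and the quasi-shuffle product\<close>

definition deconc_conv :: "(nat list \<Rightarrow> 'a::comm_ring_1) \<Rightarrow> (nat list \<Rightarrow> 'a) \<Rightarrow> nat list \<Rightarrow> 'a" where
  "deconc_conv A B \<alpha> = (\<Sum>i\<le>length \<alpha>. A (take i \<alpha>) * B (drop i \<alpha>))"

lemma conv_eq_deconc_conv: "conv A B \<alpha> = (if is_comp \<alpha> then deconc_conv A B \<alpha> else 0)"
  by (simp add: conv_def deconc_conv_def)

lemma deconc_conv_Nil [simp]: "deconc_conv A B [] = A [] * B []"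
  by (simp add: deconc_conv_def)

lemma deconc_conv_Cons:
  "deconc_conv A B (a # \<beta>) = A [] * B (a # \<beta>) + deconc_conv (\<lambda>\<gamma>. A (a # \<gamma>)) B \<beta>"
  unfolding deconc_conv_def length_Cons sum.atMost_Suc_shift by simp

lemma deconc_conv_snoc:
  "deconc_conv A B (\<beta> @ [a]) = deconc_conv A (\<lambda>\<gamma>. B (\<gamma> @ [a])) \<beta> + A (\<beta> @ [a]) * B []"
  unfolding deconc_conv_def by (simp add: sum.atMost_Suc)

lemma deconc_conv_cong:
  assumes "is_comp \<alpha>" "\<And>\<gamma>. is_comp \<gamma> \<Longrightarrow> A \<gamma> = A' \<gamma>" "\<And>\<gamma>. is_comp \<gamma> \<Longrightarrow> B \<gamma> = B' \<gamma>"
  shows "deconc_conv A B \<alpha> = deconc_conv A' B' \<alpha>"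
  unfolding deconc_conv_def by (intro sum.cong refl) (simp add: assms is_comp_take is_comp_drop)

lemma deconc_conv_uminus_left: "deconc_conv (\<lambda>\<gamma>. - A \<gamma>) B \<alpha> = - deconc_conv A B \<alpha>"
  unfolding deconc_conv_def by (simp add: sum_negf)

lemma deconc_conv_zero_left: "deconc_conv (\<lambda>\<gamma>. 0) B \<alpha> = 0"
  by (simp add: deconc_conv_def)

lemma deconc_conv_unit_left: "deconc_conv (\<lambda>\<gamma>. if \<gamma> = [] then c else 0) B \<alpha> = c * B \<alpha>"
proof -
  have "deconc_conv (\<lambda>\<gamma>. if \<gamma> = [] then c else 0) B \<alpha> = (\<Sum>i\<le>length \<alpha>. if i = 0 then c * B \<alpha> else 0)"
    unfolding deconc_conv_def by (intro sum.cong) auto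
  then show ?thesis by simp
qed

lemma deconc_conv_unit_right: "deconc_conv A (\<lambda>\<gamma>. if \<gamma> = [] then c else 0) \<alpha> = A \<alpha> * c"
proof -
  have "deconc_conv A (\<lambda>\<gamma>. if \<gamma> = [] then c else 0) \<alpha> = (\<Sum>i\<le>length \<alpha>. if i = length \<alpha> then A \<alpha> * c else 0)"
    unfolding deconc_conv_def by (intro sum.cong) auto
  then show ?thesis by simp
qed

lemma deconc_conv_inner_cong:
  assumes "\<alpha> \<noteq> []"
    and "\<And>i. 0 < i \<Longrightarrow> i < length \<alpha> \<Longrightarrow> A (take i \<alpha>) = A' (take i \<alpha>) \<and> B (drop i \<alpha>) = B' (drop i \<alpha>)"
  shows "deconc_conv A B \<alpha> - A [] * B \<alpha> - A \<alpha> * B [] = deconc_conv A' B' \<alpha> - A' [] * B' \<alpha> - A' \<alpha> * B' []"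
proof -
  have ends: "{..length \<alpha>} = insert 0 (insert (length \<alpha>) {0<..<length \<alpha>})"
    using assms(1) by auto
  have "deconc_conv C D \<alpha> - C [] * D \<alpha> - C \<alpha> * D [] = (\<Sum>i\<in>{0<..<length \<alpha>}. C (take i \<alpha>) * D (drop i \<alpha>))"
    for C D :: "nat list \<Rightarrow> 'a"
    using assms(1) unfolding deconc_conv_def ends by simp
  moreover have "(\<Sum>i\<in>{0<..<length \<alpha>}. A (take i \<alpha>) * B (drop i \<alpha>)) = (\<Sum>i\<in>{0<..<length \<alpha>}. A' (take i \<alpha>) * B' (drop i \<alpha>))"
    using assms(2) by (intro sum.cong) auto
  ultimately show ?thesis by simp
qed

lemma qsh_Nil2 [simp]: "qsh \<alpha> [] = [\<alpha>]"
  by (cases \<alpha>) auto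

lemma qsh_sum_list: "\<gamma> \<in> set (qsh \<alpha> \<beta>) \<Longrightarrow> sum_list \<gamma> = sum_list \<alpha> + sum_list \<beta>"
  by (induction \<alpha> \<beta> arbitrary: \<gamma> rule: qsh.induct) auto

lemma qsh_is_comp: "\<gamma> \<in> set (qsh \<alpha> \<beta>) \<Longrightarrow> is_comp \<alpha> \<Longrightarrow> is_comp \<beta> \<Longrightarrow> is_comp \<gamma>"
  by (induction \<alpha> \<beta> arbitrary: \<gamma> rule: qsh.induct) auto

lemma qsh_length: "\<gamma> \<in> set (qsh \<alpha> \<beta>) \<Longrightarrow> length \<alpha> \<le> length \<gamma> \<and> length \<beta> \<le> length \<gamma>"
  by (induction \<alpha> \<beta> arbitrary: \<gamma> rule: qsh.induct) fastforce+

text \<open>\<open>stuffle_eval A \<alpha> \<beta>\<close> is the value of \<open>A\<close> at \<open>M\<^sub>\<alpha> M\<^sub>\<beta>\<close>, and \<open>deconc_conv2\<close> is the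
  convolution of functionals on \<open>QSym \<otimes> QSym\<close>.\<close>

definition stuffle_eval :: "(nat list \<Rightarrow> 'a::comm_ring_1) \<Rightarrow> nat list \<Rightarrow> nat list \<Rightarrow> 'a" where
  "stuffle_eval A \<alpha> \<beta> = sum_list (map A (qsh \<alpha> \<beta>))"

lemma stuffle_eval_Nil1 [simp]: "stuffle_eval A [] \<beta> = A \<beta>"
  by (simp add: stuffle_eval_def)

lemma stuffle_eval_Nil2 [simp]: "stuffle_eval A \<alpha> [] = A \<alpha>"
  by (simp add: stuffle_eval_def)

lemma stuffle_eval_Cons:
  "stuffle_eval A (a # \<alpha>) (b # \<beta>) = stuffle_eval (\<lambda>\<gamma>. A (a # \<gamma>)) \<alpha> (b # \<beta>)
     + stuffle_eval (\<lambda>\<gamma>. A (b # \<gamma>)) (a # \<alpha>) \<beta> + stuffle_eval (\<lambda>\<gamma>. A ((a + b) # \<gamma>)) \<alpha> \<beta>"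
  by (simp add: stuffle_eval_def comp_def)

lemma stuffle_eval_add: "stuffle_eval (\<lambda>\<gamma>. A \<gamma> + B \<gamma>) \<alpha> \<beta> = stuffle_eval A \<alpha> \<beta> + stuffle_eval B \<alpha> \<beta>"
  by (simp add: stuffle_eval_def sum_list_addf)

lemma stuffle_eval_cmult: "stuffle_eval (\<lambda>\<gamma>. c * A \<gamma>) \<alpha> \<beta> = c * stuffle_eval A \<alpha> \<beta>"
  by (simp add: stuffle_eval_def sum_list_const_mult)

lemma stuffle_eval_cong:
  "(\<And>\<gamma>. \<gamma> \<in> set (qsh \<alpha> \<beta>) \<Longrightarrow> A \<gamma> = B \<gamma>) \<Longrightarrow> stuffle_eval A \<alpha> \<beta> = stuffle_eval B \<alpha> \<beta>"
  unfolding stuffle_eval_def by (metis map_cong)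

definition deconc_conv2 ::
    "(nat list \<Rightarrow> nat list \<Rightarrow> 'a::comm_ring_1) \<Rightarrow> (nat list \<Rightarrow> nat list \<Rightarrow> 'a) \<Rightarrow> nat list \<Rightarrow> nat list \<Rightarrow> 'a" where
  "deconc_conv2 F G \<alpha> \<beta> =
     (\<Sum>i\<le>length \<alpha>. \<Sum>j\<le>length \<beta>. F (take i \<alpha>) (take j \<beta>) * G (drop i \<alpha>) (drop j \<beta>))"

text \<open>The coproduct is multiplicative: \<open>\<Delta>(M\<^sub>\<alpha> M\<^sub>\<beta>) = \<Delta>(M\<^sub>\<alpha>) \<Delta>(M\<^sub>\<beta>)\<close>.\<close>

lemma stuffle_eval_deconc_conv:
  "stuffle_eval (deconc_conv A B) \<alpha> \<beta> = deconc_conv2 (stuffle_eval A) (stuffle_eval B) \<alpha> \<beta>"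
proof (induction \<alpha> \<beta> arbitrary: A rule: qsh.induct)
  case (1 \<beta>)
  then show ?case by (simp add: deconc_conv2_def deconc_conv_def)
next
  case (2 a \<alpha>)
  then show ?case by (simp add: deconc_conv2_def deconc_conv_def del: take_Cons' drop_Cons')
next
  case (3 a \<alpha> b \<beta>)
  let ?A = "\<lambda>c \<gamma>. A (c # \<gamma>)"
  have shift: "stuffle_eval (\<lambda>\<gamma>. deconc_conv A B (c # \<gamma>)) \<alpha>' \<beta>'
      = A [] * stuffle_eval (\<lambda>\<gamma>. B (c # \<gamma>)) \<alpha>' \<beta>' + stuffle_eval (deconc_conv (?A c) B) \<alpha>' \<beta>'"
    for c \<alpha>' \<beta>'
    by (simp add: deconc_conv_Cons stuffle_eval_add stuffle_eval_cmult)
  have "stuffle_eval (deconc_conv A B) (a # \<alpha>) (b # \<beta>) = A [] * stuffle_eval B (a # \<alpha>) (b # \<beta>)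
     + deconc_conv2 (stuffle_eval (?A a)) (stuffle_eval B) \<alpha> (b # \<beta>)
     + deconc_conv2 (stuffle_eval (?A b)) (stuffle_eval B) (a # \<alpha>) \<beta>
     + deconc_conv2 (stuffle_eval (?A (a + b))) (stuffle_eval B) \<alpha> \<beta>"
    unfolding stuffle_eval_Cons[of "deconc_conv A B"] shift 3[symmetric] stuffle_eval_Cons[of B]
    by (simp add: algebra_simps)
  also have "\<dots> = deconc_conv2 (stuffle_eval A) (stuffle_eval B) (a # \<alpha>) (b # \<beta>)"
    unfolding deconc_conv2_def length_Cons sum.atMost_Suc_shift
    by (simp add: stuffle_eval_Cons distrib_right sum.distrib algebra_simps
        del: stuffle_eval_Nil1 stuffle_eval_Nil2) (simp add: mult.commute)
  finally show ?case .
qed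

subsection \<open>Characters\<close>

lemma functional_eqI:
  assumes "functional \<phi>" "functional \<psi>" "\<And>\<alpha>. is_comp \<alpha> \<Longrightarrow> \<phi> \<alpha> = \<psi> \<alpha>"
  shows "\<phi> = \<psi>"
  using assms unfolding functional_def by (metis ext)

lemma characterI:
  assumes "functional A" "A [] = 1"
    and "\<And>\<alpha> \<beta>. is_comp \<alpha> \<Longrightarrow> is_comp \<beta> \<Longrightarrow> A \<alpha> * A \<beta> = stuffle_eval A \<alpha> \<beta>"
  shows "character A"
  using assms unfolding character_def stuffle_eval_def by simp

lemma character_Nil: "character A \<Longrightarrow> A [] = 1"
  by (simp add: character_def)

lemma character_stuffle_eval:
  "character A \<Longrightarrow> is_comp \<alpha> \<Longrightarrow> is_comp \<beta> \<Longrightarrow> stuffle_eval A \<alpha> \<beta> = A \<alpha> * A \<beta>"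
  unfolding character_def stuffle_eval_def by simp

lemma functional_conv: "functional (conv A B)"
  unfolding functional_def conv_def by simp

lemma stuffle_eval_conv:
  "is_comp \<alpha> \<Longrightarrow> is_comp \<beta> \<Longrightarrow> stuffle_eval (conv A B) \<alpha> \<beta> = stuffle_eval (deconc_conv A B) \<alpha> \<beta>"
  by (rule stuffle_eval_cong) (simp add: conv_eq_deconc_conv qsh_is_comp)

lemma character_conv:
  assumes A: "character A" and B: "character B"
  shows "character (conv A B)"
proof (rule characterI)
  show "functional (conv A B)" by (rule functional_conv)
  show "conv A B [] = 1" using A B by (simp add: conv_eq_deconc_conv character_Nil)
  fix \<alpha> \<beta> :: "nat list" assume \<alpha>: "is_comp \<alpha>" and \<beta>: "is_comp \<beta>"
  have "stuffle_eval (conv A B) \<alpha> \<beta> = deconc_conv2 (stuffle_eval A) (stuffle_eval B) \<alpha> \<beta>"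
    using \<alpha> \<beta> by (simp add: stuffle_eval_conv stuffle_eval_deconc_conv)
  also have "\<dots> = (\<Sum>i\<le>length \<alpha>. \<Sum>j\<le>length \<beta>.
      (A (take i \<alpha>) * B (drop i \<alpha>)) * (A (take j \<beta>) * B (drop j \<beta>)))"
    unfolding deconc_conv2_def using \<alpha> \<beta> A B
    by (intro sum.cong refl) (simp add: character_stuffle_eval is_comp_take is_comp_drop algebra_simps)
  also have "\<dots> = conv A B \<alpha> * conv A B \<beta>"
    using \<alpha> \<beta> by (simp add: conv_eq_deconc_conv deconc_conv_def sum_product)
  finally show "conv A B \<alpha> * conv A B \<beta> = stuffle_eval (conv A B) \<alpha> \<beta>" ..
qed

lemma character_bar:
  assumes A: "character A"
  shows "character (bar A)"
proof (rule characterI)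
  show "functional (bar A)" using A by (simp add: character_def functional_def bar_def)
  show "bar A [] = 1" using A by (simp add: character_Nil bar_def)
  fix \<alpha> \<beta> :: "nat list" assume \<alpha>: "is_comp \<alpha>" and \<beta>: "is_comp \<beta>"
  have "stuffle_eval (bar A) \<alpha> \<beta> = stuffle_eval (\<lambda>\<gamma>. (-1) ^ (sum_list \<alpha> + sum_list \<beta>) * A \<gamma>) \<alpha> \<beta>"
    by (rule stuffle_eval_cong) (simp add: bar_def qsh_sum_list)
  also have "\<dots> = (-1) ^ (sum_list \<alpha> + sum_list \<beta>) * (A \<alpha> * A \<beta>)"
    by (simp only: stuffle_eval_cmult character_stuffle_eval[OF A \<alpha> \<beta>])
  finally show "bar A \<alpha> * bar A \<beta> = stuffle_eval (bar A) \<alpha> \<beta>"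
    by (simp add: bar_def power_add algebra_simps)
qed

lemma deconc_conv2_outer_terms:
  assumes "\<alpha> \<noteq> [] \<or> \<beta> \<noteq> []"
  shows "deconc_conv2 F G \<alpha> \<beta> = F [] [] * G \<alpha> \<beta> + F \<alpha> \<beta> * G [] []
    + (\<Sum>(i, j) \<in> {..length \<alpha>} \<times> {..length \<beta>} - {(0, 0), (length \<alpha>, length \<beta>)}.
         F (take i \<alpha>) (take j \<beta>) * G (drop i \<alpha>) (drop j \<beta>))"
proof -
  let ?g = "\<lambda>(i, j). F (take i \<alpha>) (take j \<beta>) * G (drop i \<alpha>) (drop j \<beta>)"
  let ?I = "{..length \<alpha>} \<times> {..length \<beta>}"
  have "deconc_conv2 F G \<alpha> \<beta> = sum ?g ?I"
    unfolding deconc_conv2_def by (simp add: sum.cartesian_product)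
  also have "\<dots> = ?g (0, 0) + sum ?g (?I - {(0, 0)})"
    by (rule sum.remove) auto
  also have "sum ?g (?I - {(0, 0)}) = ?g (length \<alpha>, length \<beta>) + sum ?g (?I - {(0, 0)} - {(length \<alpha>, length \<beta>)})"
    using assms by (intro sum.remove) auto
  also have "?I - {(0, 0)} - {(length \<alpha>, length \<beta>)} = ?I - {(0, 0), (length \<alpha>, length \<beta>)}"
    by auto
  finally show ?thesis by (simp add: add.assoc)
qed

text \<open>Comparing the two squares at \<open>(\<alpha>, \<beta>)\<close> isolates \<open>2 F \<alpha> \<beta>\<close>; all other terms are known
  by induction.\<close>

lemma deconc_conv2_square_unique:
  fixes F G :: "nat list \<Rightarrow> nat list \<Rightarrow> 'a::field"
  assumes two: "(2::'a) \<noteq> 0"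
    and F: "F [] [] = 1" and G: "G [] [] = 1"
    and square: "\<And>\<alpha> \<beta>. is_comp \<alpha> \<Longrightarrow> is_comp \<beta> \<Longrightarrow> deconc_conv2 F F \<alpha> \<beta> = deconc_conv2 G G \<alpha> \<beta>"
  shows "is_comp \<alpha> \<Longrightarrow> is_comp \<beta> \<Longrightarrow> F \<alpha> \<beta> = G \<alpha> \<beta>"
proof (induction "length \<alpha> + length \<beta>" arbitrary: \<alpha> \<beta> rule: less_induct)
  case less
  show ?case
  proof (cases "\<alpha> = [] \<and> \<beta> = []")
    case True
    then show ?thesis using F G by simp
  next
    case False
    define S where "S = {..length \<alpha>} \<times> {..length \<beta>} - {(0, 0), (length \<alpha>, length \<beta>)}"
    have "(\<Sum>(i, j)\<in>S. F (take i \<alpha>) (take j \<beta>) * F (drop i \<alpha>) (drop j \<beta>))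
        = (\<Sum>(i, j)\<in>S. G (take i \<alpha>) (take j \<beta>) * G (drop i \<alpha>) (drop j \<beta>))"
    proof (rule sum.cong[OF refl], clarify)
      fix i j assume "(i, j) \<in> S"
      then have "length (take i \<alpha>) + length (take j \<beta>) < length \<alpha> + length \<beta>"
        and "length (drop i \<alpha>) + length (drop j \<beta>) < length \<alpha> + length \<beta>"
        unfolding S_def by auto
      then show "F (take i \<alpha>) (take j \<beta>) * F (drop i \<alpha>) (drop j \<beta>)
          = G (take i \<alpha>) (take j \<beta>) * G (drop i \<alpha>) (drop j \<beta>)"
        using less.hyps less.prems by (simp add: is_comp_take is_comp_drop)
    qed
    moreover have "deconc_conv2 F F \<alpha> \<beta> = deconc_conv2 G G \<alpha> \<beta>"
      using square less.prems by blast
    moreover have "\<alpha> \<noteq> [] \<or> \<beta> \<noteq> []"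
      using False by simp
    ultimately have "2 * F \<alpha> \<beta> = 2 * G \<alpha> \<beta>"
      using F G by (simp add: deconc_conv2_outer_terms S_def)
    then show ?thesis using two by simp
  qed
qed

text \<open>Both \<open>(\<alpha>, \<beta>) \<mapsto> M \<alpha> M \<beta>\<close> and \<open>stuffle_eval M\<close> square to \<open>(\<alpha>, \<beta>) \<mapsto> X \<alpha> X \<beta>\<close>.\<close>

lemma character_sqrt:
  fixes M :: "nat list \<Rightarrow> 'a::field"
  assumes two: "(2::'a) \<noteq> 0" and X: "character X" and M: "functional M" "M [] = 1"
    and square: "conv M M = X"
  shows "character M"
proof (rule characterI[OF M])
  let ?MM = "\<lambda>\<alpha> \<beta>. M \<alpha> * M \<beta>"
  have squares: "deconc_conv2 ?MM ?MM \<alpha> \<beta> = deconc_conv2 (stuffle_eval M) (stuffle_eval M) \<alpha> \<beta>"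
    if \<alpha>: "is_comp \<alpha>" and \<beta>: "is_comp \<beta>" for \<alpha> \<beta>
  proof -
    have "deconc_conv2 ?MM ?MM \<alpha> \<beta> = deconc_conv M M \<alpha> * deconc_conv M M \<beta>"
      unfolding deconc_conv2_def deconc_conv_def by (simp add: sum_product algebra_simps)
    also have "\<dots> = X \<alpha> * X \<beta>"
      using \<alpha> \<beta> square by (auto simp: conv_eq_deconc_conv)
    also have "\<dots> = stuffle_eval X \<alpha> \<beta>"
      using character_stuffle_eval[OF X \<alpha> \<beta>] by simp
    also have "\<dots> = stuffle_eval (deconc_conv M M) \<alpha> \<beta>"
      using stuffle_eval_conv[OF \<alpha> \<beta>, of M M] square by simp
    also have "\<dots> = deconc_conv2 (stuffle_eval M) (stuffle_eval M) \<alpha> \<beta>"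
      by (rule stuffle_eval_deconc_conv)
    finally show ?thesis .
  qed
  show "M \<alpha> * M \<beta> = stuffle_eval M \<alpha> \<beta>" if "is_comp \<alpha>" "is_comp \<beta>" for \<alpha> \<beta>
    by (rule deconc_conv2_square_unique[OF two _ _ squares that]) (simp_all add: M)
qed

text \<open>At a composition of size \<open>n\<close>, with \<open>s = (-1)\<^sup>n\<close> and all shorter compositions already
  settled, evenness of \<open>p\<close> gives \<open>s p = p\<close>, oddness of \<open>m\<close> fixes \<open>s m + m\<close>, and the
  product fixes \<open>p + m\<close>.\<close>

lemma sign_parts_unique:
  fixes s x y x' y' :: "'a::field"
  assumes two: "(2::'a) \<noteq> 0" and s: "s = 1 \<or> s = -1"
    and even: "s * x = x" "s * x' = x'" and odd: "s * y + y = s * y' + y'" and sum: "x + y = x' + y'"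
  shows "x = x' \<and> y = y'"
  using s
proof
  assume "s = 1"
  then have "2 * y = 2 * y'" using odd by simp
  then have "y = y'" using two by simp
  then show ?thesis using sum by simp
next
  assume "s = -1"
  then have "x + x = 0" "x' + x' = 0" using even by (simp_all add: neg_eq_iff_add_eq_0)
  then have "2 * x = 0" "2 * x' = 0" by (simp_all only: mult_2)
  then have "x = 0" "x' = 0" using two by simp_all
  then show ?thesis using sum by simp
qed

lemma even_odd_factorization_unique:
  fixes p m p' m' :: "nat list \<Rightarrow> 'a::field"
  assumes two: "(2::'a) \<noteq> 0"
    and p: "character p" "even_fn p" and m: "character m" "odd_fn m"
    and p': "character p'" "even_fn p'" and m': "character m'" "odd_fn m'"
    and same_product: "conv p m = conv p' m'"
  shows "p = p' \<and> m = m'"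
proof -
  have "p \<alpha> = p' \<alpha> \<and> m \<alpha> = m' \<alpha>" if "is_comp \<alpha>" for \<alpha>
    using that
  proof (induction \<alpha> rule: length_induct)
    case (1 \<alpha>)
    show ?case
    proof (cases "\<alpha> = []")
      case True
      then show ?thesis using p m p' m' by (simp add: character_Nil)
    next
      case False
      have shorter: "p (take i \<alpha>) = p' (take i \<alpha>) \<and> m (take i \<alpha>) = m' (take i \<alpha>)
          \<and> p (drop i \<alpha>) = p' (drop i \<alpha>) \<and> m (drop i \<alpha>) = m' (drop i \<alpha>)"
        if "0 < i" "i < length \<alpha>" for i
        using 1 that by (simp add: is_comp_take is_comp_drop)
      have units: "p [] = 1" "m [] = 1" "p' [] = 1" "m' [] = 1" "bar m [] = 1" "bar m' [] = 1"
        using p m p' m' by (simp_all add: character_Nil bar_def)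
      have "deconc_conv p m \<alpha> = deconc_conv p' m' \<alpha>"
        using fun_cong[OF same_product, of \<alpha>] 1 by (simp add: conv_eq_deconc_conv)
      moreover have "deconc_conv p m \<alpha> - m \<alpha> - p \<alpha> = deconc_conv p' m' \<alpha> - m' \<alpha> - p' \<alpha>"
        using deconc_conv_inner_cong[OF False, of p p' m m'] shorter units by simp
      ultimately have product_eq: "p \<alpha> + m \<alpha> = p' \<alpha> + m' \<alpha>"
        by (simp add: algebra_simps)
      have "conv (bar m) m \<alpha> = conv (bar m') m' \<alpha>"
        using m(2) m'(2) by (simp add: odd_fn_def)
      then have "deconc_conv (bar m) m \<alpha> = deconc_conv (bar m') m' \<alpha>"
        using 1 by (simp add: conv_eq_deconc_conv)
      moreover have "deconc_conv (bar m) m \<alpha> - m \<alpha> - bar m \<alpha> = deconc_conv (bar m') m' \<alpha> - m' \<alpha> - bar m' \<alpha>"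
        using deconc_conv_inner_cong[OF False, of "bar m" "bar m'" m m'] shorter units
        by (simp add: bar_def)
      ultimately have odd_eq: "bar m \<alpha> + m \<alpha> = bar m' \<alpha> + m' \<alpha>"
        by (simp add: algebra_simps)
      have even_eq: "bar p \<alpha> = p \<alpha>" "bar p' \<alpha> = p' \<alpha>"
        using p p' by (simp_all add: even_fn_def)
      have "(-1 :: 'a) ^ sum_list \<alpha> = 1 \<or> (-1 :: 'a) ^ sum_list \<alpha> = -1"
        by (cases "even (sum_list \<alpha>)") simp_all
      then show ?thesis
        using sign_parts_unique[OF two] product_eq odd_eq even_eq unfolding bar_def by blast
    qed
  qed
  then show ?thesis
    using p m p' m' by (auto intro: functional_eqI simp: character_def)
qed

subsection \<open>Functionals depending only on the number of odd parts\<close>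

definition kodd_fn :: "'a::comm_ring_1 fps \<Rightarrow> nat list \<Rightarrow> 'a" where
  "kodd_fn f \<alpha> = (if is_comp \<alpha> then (-1) ^ length \<alpha> * f $ k_odd \<alpha> else 0)"

definition kodd_hd_fn :: "'a::comm_ring_1 fps \<Rightarrow> nat list \<Rightarrow> 'a" where
  "kodd_hd_fn f \<alpha> =
     (if is_comp \<alpha> \<and> (\<alpha> = [] \<or> odd (hd \<alpha>)) then (-1) ^ length \<alpha> * f $ k_odd \<alpha> else 0)"

lemma functional_kodd_fn: "functional (kodd_fn f)"
  by (simp add: functional_def kodd_fn_def)

lemma functional_kodd_hd_fn: "functional (kodd_hd_fn f)"
  by (simp add: functional_def kodd_hd_fn_def)

lemma fps_mult_nth_Suc_shift: "(f * g) $ Suc k = f $ 0 * g $ Suc k + (fps_shift 1 f * g) $ k"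
  unfolding fps_mult_nth atLeast0AtMost sum.atMost_Suc_shift by simp

lemma deconc_conv_kodd_fn_kodd_hd_fn:
  "is_comp \<alpha> \<Longrightarrow> deconc_conv (kodd_fn f) (kodd_hd_fn g) \<alpha> = (-1) ^ length \<alpha> * (f * g) $ k_odd \<alpha>"
proof (induction \<alpha> arbitrary: f)
  case Nil
  then show ?case by (simp add: kodd_fn_def kodd_hd_fn_def)
next
  case (Cons a \<beta>)
  define f' where "f' = (if odd a then fps_shift 1 f else f)"
  have a: "0 < a" and \<beta>: "is_comp \<beta>" using Cons.prems by auto
  have "deconc_conv (\<lambda>\<gamma>. kodd_fn f (a # \<gamma>)) (kodd_hd_fn g) \<beta> = deconc_conv (\<lambda>\<gamma>. - kodd_fn f' \<gamma>) (kodd_hd_fn g) \<beta>"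
    by (rule deconc_conv_cong[OF \<beta>]) (simp_all add: kodd_fn_def f'_def a)
  also have "\<dots> = - ((-1) ^ length \<beta> * (f' * g) $ k_odd \<beta>)"
    by (simp add: deconc_conv_uminus_left Cons.IH[OF \<beta>])
  finally have "deconc_conv (kodd_fn f) (kodd_hd_fn g) (a # \<beta>)
      = f $ 0 * kodd_hd_fn g (a # \<beta>) - (-1) ^ length \<beta> * (f' * g) $ k_odd \<beta>"
    by (simp add: deconc_conv_Cons kodd_fn_def)
  moreover have "kodd_hd_fn g (a # \<beta>) = (if odd a then - ((-1) ^ length \<beta> * g $ Suc (k_odd \<beta>)) else 0)"
    using a \<beta> by (simp add: kodd_hd_fn_def)
  ultimately show ?case
    by (cases "odd a") (simp_all add: f'_def fps_mult_nth_Suc_shift algebra_simps)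
qed

lemma conv_kodd_fn_kodd_hd_fn: "conv (kodd_fn f) (kodd_hd_fn g) = kodd_fn (f * g)"
  by (rule ext) (simp add: conv_eq_deconc_conv deconc_conv_kodd_fn_kodd_hd_fn kodd_fn_def)

lemma conv_kodd_hd_fn: "conv (kodd_hd_fn f) (kodd_hd_fn g) = kodd_hd_fn (f * g)"
proof
  fix \<alpha> :: "nat list"
  show "conv (kodd_hd_fn f) (kodd_hd_fn g) \<alpha> = kodd_hd_fn (f * g) \<alpha>"
  proof (cases "is_comp \<alpha> \<and> \<alpha> \<noteq> []")
    case False
    then show ?thesis by (auto simp: conv_eq_deconc_conv kodd_hd_fn_def)
  next
    case True
    then obtain a \<beta> where \<alpha>: "\<alpha> = a # \<beta>" and comp: "is_comp \<alpha>" by (cases \<alpha>) auto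
    show ?thesis
    proof (cases "odd a")
      case True
      have "deconc_conv (kodd_hd_fn f) (kodd_hd_fn g) \<alpha> = deconc_conv (kodd_fn f) (kodd_hd_fn g) \<alpha>"
        unfolding deconc_conv_def using True comp \<alpha>
        by (intro sum.cong refl) (auto simp: kodd_fn_def kodd_hd_fn_def is_comp_take take_Cons')
      then show ?thesis using True comp \<alpha>
        by (simp add: conv_eq_deconc_conv deconc_conv_kodd_fn_kodd_hd_fn kodd_hd_fn_def)
    next
      case False
      have "deconc_conv (\<lambda>\<gamma>. kodd_hd_fn f (a # \<gamma>)) (kodd_hd_fn g) \<beta> = 0"
        using False by (simp add: kodd_hd_fn_def deconc_conv_zero_left)
      then show ?thesis using False comp \<alpha>
        by (simp add: conv_eq_deconc_conv deconc_conv_Cons kodd_hd_fn_def)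
    qed
  qed
qed

lemma bar_kodd_fn: "bar (kodd_fn f) = kodd_fn (f oo - fps_X)"
  by (rule ext) (simp add: bar_def kodd_fn_def fps_compose_uminus' neg_one_power_sum_list)

lemma bar_kodd_hd_fn: "bar (kodd_hd_fn f) = kodd_hd_fn (f oo - fps_X)"
  by (rule ext) (auto simp: bar_def kodd_hd_fn_def fps_compose_uminus' neg_one_power_sum_list)

lemma counit_eq_kodd_hd_fn: "counit = kodd_hd_fn 1"
proof
  fix \<alpha> :: "nat list"
  show "counit \<alpha> = kodd_hd_fn 1 \<alpha>"
    by (cases \<alpha>) (auto simp: counit_def kodd_hd_fn_def)
qed

subsection \<open>The universal character and its inverse\<close>

lemma kodd_fn_ones: "kodd_fn (Abs_fps (\<lambda>_. 1)) \<alpha> = (if is_comp \<alpha> then (-1) ^ length \<alpha> else 0)"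
  by (simp add: kodd_fn_def)

lemma zeta_Nil [simp]: "zeta [] = 1"
  by (simp add: zeta_def)

lemma deconc_conv_zeta_Cons:
  assumes "0 < a" "is_comp \<beta>"
  shows "deconc_conv zeta B (a # \<beta>) = B (a # \<beta>) + B \<beta>"
proof -
  have "deconc_conv (\<lambda>\<gamma>. zeta (a # \<gamma>)) B \<beta> = deconc_conv (\<lambda>\<gamma>. if \<gamma> = [] then 1 else 0) B \<beta>"
    by (rule deconc_conv_cong) (auto simp: zeta_def assms)
  then show ?thesis by (simp add: deconc_conv_Cons deconc_conv_unit_left)
qed

lemma deconc_conv_zeta_snoc:
  assumes "0 < a" "is_comp \<beta>"
  shows "deconc_conv A zeta (\<beta> @ [a]) = A \<beta> + A (\<beta> @ [a])"
proof -
  have "deconc_conv A (\<lambda>\<gamma>. zeta (\<gamma> @ [a])) \<beta> = deconc_conv A (\<lambda>\<gamma>. if \<gamma> = [] then 1 else 0) \<beta>"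
    by (rule deconc_conv_cong) (auto simp: zeta_def assms)
  then show ?thesis by (simp add: deconc_conv_snoc deconc_conv_unit_right)
qed

lemma conv_zeta_left_inverse_unique:
  assumes "functional \<psi>" and "conv zeta \<psi> = counit"
  shows "\<psi> = kodd_fn (Abs_fps (\<lambda>_. 1))"
proof (rule functional_eqI[OF assms(1) functional_kodd_fn])
  show "\<psi> \<alpha> = kodd_fn (Abs_fps (\<lambda>_. 1)) \<alpha>" if "is_comp \<alpha>" for \<alpha>
    using that
  proof (induction \<alpha>)
    case Nil
    then show ?case
      using fun_cong[OF assms(2), of "[]"] by (simp add: conv_eq_deconc_conv counit_def kodd_fn_ones)
  next
    case (Cons a \<beta>)
    have "\<psi> (a # \<beta>) + \<psi> \<beta> = 0"
      using fun_cong[OF assms(2), of "a # \<beta>"] Cons.prems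
      by (simp add: conv_eq_deconc_conv deconc_conv_zeta_Cons counit_def)
    then show ?case using Cons by (simp add: kodd_fn_ones eq_neg_iff_add_eq_0)
  qed
qed

lemma conv_inv_zeta: "conv_inv zeta = kodd_fn (Abs_fps (\<lambda>_. 1))"
  unfolding conv_inv_def
proof (rule the_equality)
  have "conv zeta (kodd_fn (Abs_fps (\<lambda>_. 1))) \<alpha> = counit \<alpha>" for \<alpha>
    by (cases \<alpha>) (auto simp: conv_eq_deconc_conv counit_def deconc_conv_zeta_Cons kodd_fn_ones)
  moreover have "conv (kodd_fn (Abs_fps (\<lambda>_. 1))) zeta \<alpha> = counit \<alpha>" for \<alpha>
    by (cases \<alpha> rule: rev_exhaust) (auto simp: conv_eq_deconc_conv counit_def deconc_conv_zeta_snoc kodd_fn_ones)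
  ultimately show "functional (kodd_fn (Abs_fps (\<lambda>_. 1))) \<and> conv zeta (kodd_fn (Abs_fps (\<lambda>_. 1))) = counit
      \<and> conv (kodd_fn (Abs_fps (\<lambda>_. 1))) zeta = counit"
    by (auto simp: functional_kodd_fn)
qed (use conv_zeta_left_inverse_unique in blast)

lemma character_zeta: "character zeta"
proof (rule characterI)
  show "functional zeta" by (simp add: functional_def zeta_def)
  show "zeta [] = 1" by simp
  fix \<alpha> \<beta> :: "nat list" assume \<alpha>: "is_comp \<alpha>" and \<beta>: "is_comp \<beta>"
  show "zeta \<alpha> * zeta \<beta> = stuffle_eval zeta \<alpha> \<beta>"
  proof (cases "length \<alpha> \<le> 1 \<and> length \<beta> \<le> 1")
    case True
    then consider "\<alpha> = [] \<or> \<beta> = []" | a b where "\<alpha> = [a]" "\<beta> = [b]"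
      by (cases \<alpha>; cases \<beta>) auto
    then show ?thesis
      using \<alpha> \<beta> by cases (auto simp: stuffle_eval_def zeta_def)
  next
    case False
    have "stuffle_eval zeta \<alpha> \<beta> = stuffle_eval (\<lambda>_. 0) \<alpha> \<beta>"
    proof (rule stuffle_eval_cong)
      fix \<gamma> assume "\<gamma> \<in> set (qsh \<alpha> \<beta>)"
      then have "2 \<le> length \<gamma>" using False qsh_length[of \<gamma> \<alpha> \<beta>] by linarith
      then show "zeta \<gamma> = 0" by (simp add: zeta_def)
    qed
    then show ?thesis using False by (auto simp: stuffle_eval_def zeta_def)
  qed
qed

lemma stuffle_eval_kodd_fn_ones:
  "is_comp \<alpha> \<Longrightarrow> is_comp \<beta> \<Longrightarrow>
    stuffle_eval (kodd_fn (Abs_fps (\<lambda>_. 1))) \<alpha> \<beta> = (-1) ^ (length \<alpha> + length \<beta>)"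
proof (induction \<alpha> \<beta> rule: qsh.induct)
  case (3 a \<alpha> b \<beta>)
  have Cons: "stuffle_eval (\<lambda>\<gamma>. kodd_fn (Abs_fps (\<lambda>_. 1)) (c # \<gamma>)) \<alpha>' \<beta>'
      = - stuffle_eval (kodd_fn (Abs_fps (\<lambda>_. 1))) \<alpha>' \<beta>'"
    if "0 < c" "is_comp \<alpha>'" "is_comp \<beta>'" for c \<alpha>' \<beta>'
  proof -
    have "stuffle_eval (\<lambda>\<gamma>. kodd_fn (Abs_fps (\<lambda>_. 1)) (c # \<gamma>)) \<alpha>' \<beta>'
        = stuffle_eval (\<lambda>\<gamma>. -1 * kodd_fn (Abs_fps (\<lambda>_. 1)) \<gamma>) \<alpha>' \<beta>'"
      using that by (intro stuffle_eval_cong) (simp add: kodd_fn_ones qsh_is_comp)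
    then show ?thesis by (simp only: stuffle_eval_cmult) simp
  qed
  show ?case using 3 by (simp add: stuffle_eval_Cons Cons)
qed (simp_all add: kodd_fn_ones)

lemma character_kodd_fn_ones: "character (kodd_fn (Abs_fps (\<lambda>_. 1)))"
proof (rule characterI)
  show "functional (kodd_fn (Abs_fps (\<lambda>_. 1)))" by (rule functional_kodd_fn)
  show "kodd_fn (Abs_fps (\<lambda>_. 1)) [] = 1" by (simp add: kodd_fn_ones)
  show "kodd_fn (Abs_fps (\<lambda>_. 1)) \<alpha> * kodd_fn (Abs_fps (\<lambda>_. 1)) \<beta>
      = stuffle_eval (kodd_fn (Abs_fps (\<lambda>_. 1))) \<alpha> \<beta>" if "is_comp \<alpha>" "is_comp \<beta>" for \<alpha> \<beta>
    using that by (simp add: stuffle_eval_kodd_fn_ones kodd_fn_ones power_add)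
qed

lemma conv_bar_zeta_kodd_fn_ones:
  "conv (bar zeta) (kodd_fn (Abs_fps (\<lambda>_. 1))) = kodd_hd_fn ((1 + fps_X) * Abs_fps (\<lambda>_. 1))"
proof
  fix \<alpha> :: "nat list"
  show "conv (bar zeta) (kodd_fn (Abs_fps (\<lambda>_. 1))) \<alpha> = kodd_hd_fn ((1 + fps_X) * Abs_fps (\<lambda>_. 1)) \<alpha>"
  proof (cases "is_comp \<alpha> \<and> \<alpha> \<noteq> []")
    case False
    then show ?thesis by (auto simp: conv_eq_deconc_conv bar_def kodd_fn_ones kodd_hd_fn_def)
  next
    case True
    then obtain a \<beta> where \<alpha>: "\<alpha> = a # \<beta>" and a: "0 < a" and \<beta>: "is_comp \<beta>"
      by (cases \<alpha>) auto
    have "deconc_conv (\<lambda>\<gamma>. bar zeta (a # \<gamma>)) (kodd_fn (Abs_fps (\<lambda>_. 1))) \<beta>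
        = deconc_conv (\<lambda>\<gamma>. if \<gamma> = [] then (-1) ^ a else 0) (kodd_fn (Abs_fps (\<lambda>_. 1))) \<beta>"
      by (rule deconc_conv_cong[OF \<beta>]) (auto simp: zeta_def bar_def a)
    then have "conv (bar zeta) (kodd_fn (Abs_fps (\<lambda>_. 1))) \<alpha> = (-1) ^ Suc (length \<beta>) + (-1) ^ a * (-1) ^ length \<beta>"
      using \<alpha> a \<beta> by (simp add: conv_eq_deconc_conv deconc_conv_Cons deconc_conv_unit_left bar_def kodd_fn_ones)
    then show ?thesis
      using \<alpha> a \<beta> by (cases "odd a") (auto simp: kodd_hd_fn_def distrib_right)
  qed
qed

subsection \<open>The series \<open>(1 - x\<^sup>2)\<^sup>-\<^sup>1\<^sup>/\<^sup>2\<close>\<close>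

lemma central_binomial_Suc: "Suc k * ((2 * Suc k) choose Suc k) = 2 * (2 * k + 1) * ((2 * k) choose k)"
proof -
  have "Suc k * ((2 * Suc k) choose Suc k) = 2 * (Suc k * ((2 * k + 1) choose k))"
    using Suc_times_binomial[of k "2 * k + 1"] by simp
  also have "Suc k * ((2 * k + 1) choose k) = Suc k * (Suc (2 * k) choose Suc k)"
    using binomial_symmetric[of "Suc k" "Suc (2 * k)"] by simp
  also have "\<dots> = Suc (2 * k) * ((2 * k) choose k)"
    using Suc_times_binomial_eq[of "2 * k" k] by simp
  finally show ?thesis by simp
qed

lemma gbinomial_minus_half: "((-1/2 :: real) gchoose k) = (-1/4) ^ k * of_nat ((2 * k) choose k)"
proof (induction k)
  case (Suc k)
  have "real (Suc k) * ((-1/2) gchoose Suc k) = (-1/2 - real k) * ((-1/2) gchoose k)"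
    using gbinomial_mult_1[of "-1/2 :: real" k] by (simp add: algebra_simps)
  also have "\<dots> = (-1/4) ^ Suc k * (2 * (2 * real k + 1) * real ((2 * k) choose k))"
    unfolding Suc.IH by (simp add: field_simps)
  also have "2 * (2 * real k + 1) * real ((2 * k) choose k) = real (Suc k) * real ((2 * Suc k) choose Suc k)"
  proof -
    have "real (2 * (2 * k + 1) * ((2 * k) choose k)) = real (Suc k * ((2 * Suc k) choose Suc k))"
      by (simp only: central_binomial_Suc)
    then show ?thesis by (simp only: of_nat_mult of_nat_add of_nat_1 of_nat_numeral)
  qed
  finally have "real (Suc k) * ((-1/2) gchoose Suc k) = real (Suc k) * ((-1/4) ^ Suc k * real ((2 * Suc k) choose Suc k))"
    by (simp only: mult_ac)
  then show ?case
    by (rule mult_left_cancel[THEN iffD1, rotated]) simp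
qed simp

lemma sum_central_binomial_products: "(\<Sum>a\<le>q. ((2 * a) choose a) * ((2 * (q - a)) choose (q - a))) = 4 ^ q"
proof -
  let ?S = "\<Sum>a\<le>q. ((2 * a) choose a) * ((2 * (q - a)) choose (q - a))"
  have "(-1/4 :: real) ^ q * real ?S = (\<Sum>a=0..q. ((-1/2 :: real) gchoose a) * ((-1/2) gchoose (q - a)))"
    unfolding of_nat_sum sum_distrib_left atLeast0AtMost
  proof (intro sum.cong refl)
    fix a assume "a \<in> {..q}"
    then have "(-1/4 :: real) ^ q = (-1/4) ^ a * (-1/4) ^ (q - a)"
      by (simp flip: power_add)
    then show "(-1/4) ^ q * real (((2 * a) choose a) * ((2 * (q - a)) choose (q - a)))
        = ((-1/2) gchoose a) * ((-1/2) gchoose (q - a))"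
      unfolding gbinomial_minus_half by simp
  qed
  also have "\<dots> = (-1) gchoose q"
    using gbinomial_Vandermonde[of "-1/2 :: real" "-1/2" q] by simp
  also have "\<dots> = (-1) ^ q"
    using gbinomial_minus[of "1 :: real" q] by (simp add: binomial_gbinomial[symmetric])
  finally have "real ?S = (-1) ^ q / (-1/4) ^ q"
    by (simp add: field_simps)
  also have "\<dots> = 4 ^ q"
    by (simp flip: power_divide)
  finally show ?thesis
    by (metis of_nat_eq_iff of_nat_numeral of_nat_power)
qed

definition inv_sqrt_series :: "'a::field fps" where
  "inv_sqrt_series = Abs_fps (\<lambda>n. if even n then of_nat (n choose (n div 2)) / 2 ^ n else 0)"

lemma inv_sqrt_series_nth:
  "inv_sqrt_series $ n = (if even n then of_nat (n choose (n div 2)) / 2 ^ n else 0)"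
  by (simp add: inv_sqrt_series_def)

lemma sum_atMost_double:
  fixes f :: "nat \<Rightarrow> 'a::comm_monoid_add"
  assumes "\<And>i. odd i \<Longrightarrow> f i = 0"
  shows "(\<Sum>i\<le>2 * q. f i) = (\<Sum>a\<le>q. f (2 * a))"
  by (induction q) (simp_all add: assms)

lemma inv_sqrt_series_square_nth_odd:
  "odd n \<Longrightarrow> (inv_sqrt_series * inv_sqrt_series) $ n = (0 :: 'a::field)"
  unfolding fps_mult_nth by (intro sum.neutral) (auto simp: inv_sqrt_series_nth)

lemma inv_sqrt_series_square_nth_even:
  assumes two: "(2::'a::field) \<noteq> 0"
  shows "(inv_sqrt_series * inv_sqrt_series) $ (2 * q) = (1 :: 'a)"
proof -
  let ?P = "inv_sqrt_series :: 'a fps"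
  have "(?P * ?P) $ (2 * q) = (\<Sum>a\<le>q. ?P $ (2 * a) * ?P $ (2 * q - 2 * a))"
    unfolding fps_mult_nth atLeast0AtMost
    by (rule sum_atMost_double) (simp add: inv_sqrt_series_nth)
  also have "\<dots> = (\<Sum>a\<le>q. of_nat (((2 * a) choose a) * ((2 * (q - a)) choose (q - a))) / 2 ^ (2 * q))"
  proof (intro sum.cong refl)
    fix a assume "a \<in> {..q}"
    then have "2 * q = 2 * a + 2 * (q - a)" by simp
    then have "(2::'a) ^ (2 * q) = 2 ^ (2 * a) * 2 ^ (2 * (q - a))"
      by (subst \<open>2 * q = 2 * a + 2 * (q - a)\<close>) (rule power_add)
    moreover have "2 * q - 2 * a = 2 * (q - a)" by simp
    ultimately show "?P $ (2 * a) * ?P $ (2 * q - 2 * a)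
        = of_nat (((2 * a) choose a) * ((2 * (q - a)) choose (q - a))) / 2 ^ (2 * q)"
      by (simp add: inv_sqrt_series_nth)
  qed
  also have "\<dots> = of_nat (4 ^ q) / 2 ^ (2 * q)"
    by (simp only: sum_divide_distrib[symmetric] of_nat_sum[symmetric] sum_central_binomial_products)
  also have "of_nat (4 ^ q) = (2::'a) ^ (2 * q)"
    by (simp add: power_mult)
  also have "(2::'a) ^ (2 * q) / 2 ^ (2 * q) = 1"
    using two by simp
  finally show ?thesis .
qed

lemma inv_sqrt_series_square:
  assumes two: "(2::'a::field) \<noteq> 0"
  shows "(1 - fps_X ^ 2) * (inv_sqrt_series * inv_sqrt_series) = (1 :: 'a fps)"
proof -
  have "inv_sqrt_series * inv_sqrt_series = Abs_fps (\<lambda>n. if even n then 1 else 0 :: 'a)"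
    by (rule fps_ext) (auto simp: inv_sqrt_series_square_nth_odd inv_sqrt_series_square_nth_even[OF two])
  moreover have "(1 - fps_X ^ 2) * Abs_fps (\<lambda>n. if even n then 1 else 0) = (1 :: 'a fps)"
    by (rule fps_ext) (auto simp: algebra_simps fps_X_power_mult_nth)
  ultimately show ?thesis by simp
qed

lemma inv_sqrt_series_reflect: "inv_sqrt_series oo - fps_X = inv_sqrt_series"
  by (rule fps_ext) (simp add: fps_compose_uminus' inv_sqrt_series_def)

lemma one_plus_X_times_inv_sqrt_series_reflect:
  "((1 + fps_X) * inv_sqrt_series) oo - fps_X = (1 - fps_X) * (inv_sqrt_series :: 'a::field fps)"
  by (simp add: fps_compose_mult_distrib fps_compose_add_distrib inv_sqrt_series_reflect)

lemma nth_one_plus_X_times_inv_sqrt_series: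
  "((1 + fps_X) * inv_sqrt_series) $ n = (of_nat ((2 * (n div 2)) choose (n div 2)) / 2 ^ (2 * (n div 2)) :: 'a::field)"
  by (cases "even n") (auto simp: distrib_right inv_sqrt_series_def elim!: evenE oddE)

lemma fps_one_minus_X_times_ones: "(1 - fps_X) * Abs_fps (\<lambda>_. 1) = (1 :: 'a::comm_ring_1 fps)"
  by (rule fps_ext) (simp add: algebra_simps)

lemma fps_one_minus_X_mult_cancel:
  fixes f g :: "'a::idom fps"
  assumes "(1 - fps_X) * f = (1 - fps_X) * g"
  shows "f = g"
proof -
  have "(1 - fps_X :: 'a fps) $ 0 \<noteq> 0 $ 0" by simp
  then have "(1 - fps_X :: 'a fps) \<noteq> 0" by auto
  then show ?thesis using assms by simp
qed

lemma ones_times_one_minus_X_times: "Abs_fps (\<lambda>_. 1) * ((1 - fps_X) * f) = (f :: 'a::comm_ring_1 fps)"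
proof -
  have "Abs_fps (\<lambda>_. 1) * ((1 - fps_X) * f) = ((1 - fps_X) * Abs_fps (\<lambda>_. 1)) * f"
    by (simp only: ac_simps)
  then show ?thesis
    by (simp add: fps_one_minus_X_times_ones)
qed

lemma inv_sqrt_series_square_factored:
  assumes two: "(2::'a::field) \<noteq> 0"
  shows "(1 - fps_X) * ((1 + fps_X) * (inv_sqrt_series * inv_sqrt_series)) = (1 :: 'a fps)"
proof -
  have "(1 - fps_X) * ((1 + fps_X) * (inv_sqrt_series * inv_sqrt_series))
      = (1 - fps_X ^ 2) * (inv_sqrt_series * inv_sqrt_series :: 'a fps)"
    by (simp add: algebra_simps power2_eq_square)
  also have "\<dots> = 1"
    by (rule inv_sqrt_series_square[OF two])
  finally show ?thesis .
qed

lemma one_plus_X_times_inv_sqrt_series_square: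
  assumes two: "(2::'a::field) \<noteq> 0"
  shows "(1 + fps_X) * inv_sqrt_series * ((1 + fps_X) * inv_sqrt_series)
    = (1 + fps_X) * Abs_fps (\<lambda>_. 1 :: 'a)"
proof -
  let ?P = "inv_sqrt_series :: 'a fps"
  have "(1 - fps_X) * ((1 + fps_X) * ?P * ((1 + fps_X) * ?P))
      = (1 + fps_X) * ((1 - fps_X) * ((1 + fps_X) * (?P * ?P)))"
    by (simp only: ac_simps)
  also have "\<dots> = (1 - fps_X) * ((1 + fps_X) * Abs_fps (\<lambda>_. 1))"
    using inv_sqrt_series_square_factored[OF two] fps_one_minus_X_times_ones[where 'a='a]
    by (simp add: mult.left_commute[of "1 - fps_X"])
  finally show ?thesis
    by (rule fps_one_minus_X_mult_cancel)
qed

lemma inv_sqrt_series_times_one_plus_X_times_inv_sqrt_series: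
  assumes two: "(2::'a::field) \<noteq> 0"
  shows "inv_sqrt_series * ((1 + fps_X) * inv_sqrt_series) = Abs_fps (\<lambda>_. 1 :: 'a)"
proof -
  let ?P = "inv_sqrt_series :: 'a fps"
  have "(1 - fps_X) * (?P * ((1 + fps_X) * ?P)) = (1 - fps_X) * ((1 + fps_X) * (?P * ?P))"
    by (simp only: ac_simps)
  also have "\<dots> = (1 - fps_X) * Abs_fps (\<lambda>_. 1)"
    by (simp only: inv_sqrt_series_square_factored[OF two] fps_one_minus_X_times_ones)
  finally show ?thesis
    by (rule fps_one_minus_X_mult_cancel)
qed

subsection \<open>The even and odd parts of \<open>\<zeta>\<^sup>-\<^sup>1\<close>\<close>

lemma even_odd_factors_eqI:
  assumes two: "(2::'a::field) \<noteq> 0"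
    and "character p" "even_fn p" "character m" "odd_fn m" "conv p m = (\<phi> :: nat list \<Rightarrow> 'a)"
  shows "even_odd_factors \<phi> = (p, m)"
  unfolding even_odd_factors_def
proof (rule the_equality)
  show "case (p, m) of (p, m) \<Rightarrow> character p \<and> character m \<and> even_fn p \<and> odd_fn m \<and> conv p m = \<phi>"
    using assms by simp
next
  fix pm :: "(nat list \<Rightarrow> 'a) \<times> (nat list \<Rightarrow> 'a)"
  assume "case pm of (p', m') \<Rightarrow> character p' \<and> character m' \<and> even_fn p' \<and> odd_fn m' \<and> conv p' m' = \<phi>"
  then show "pm = (p, m)"
    using even_odd_factorization_unique[OF two _ _ _ _ assms(2-5)] assms(6) by (cases pm) auto
qed

lemma even_odd_factors_conv_inv_zeta:
  assumes two: "(2::'a::field) \<noteq> 0"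
  shows "even_odd_factors (conv_inv (zeta :: nat list \<Rightarrow> 'a))
    = (kodd_fn inv_sqrt_series, kodd_hd_fn ((1 + fps_X) * inv_sqrt_series))"
proof (rule even_odd_factors_eqI[OF two])
  let ?P = "inv_sqrt_series :: 'a fps"
  let ?p = "kodd_fn ?P" and ?m = "kodd_hd_fn ((1 + fps_X) * ?P)"
  have inv: "conv_inv zeta = kodd_fn (Abs_fps (\<lambda>_. 1))"
    by (rule conv_inv_zeta)
  have "conv ?m ?m = conv (bar zeta) (conv_inv zeta)"
    unfolding inv conv_kodd_hd_fn conv_bar_zeta_kodd_fn_ones one_plus_X_times_inv_sqrt_series_square[OF two] ..
  then show char_m: "character ?m"
    by (intro character_sqrt[OF two _ functional_kodd_hd_fn])
      (simp_all add: inv character_conv character_bar character_zeta character_kodd_fn_ones kodd_hd_fn_def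
        inv_sqrt_series_nth)
  have bar_m: "bar ?m = kodd_hd_fn ((1 - fps_X) * ?P)"
    by (simp add: bar_kodd_hd_fn one_plus_X_times_inv_sqrt_series_reflect)
  have "?p = conv (conv_inv zeta) (bar ?m)"
    unfolding inv bar_m conv_kodd_fn_kodd_hd_fn ones_times_one_minus_X_times ..
  then show "character ?p"
    by (simp add: inv character_conv character_bar char_m character_kodd_fn_ones)
  show "even_fn ?p"
    by (simp add: even_fn_def bar_kodd_fn inv_sqrt_series_reflect)
  have "(1 - fps_X) * ?P * ((1 + fps_X) * ?P) = 1" "(1 + fps_X) * ?P * ((1 - fps_X) * ?P) = 1"
    using inv_sqrt_series_square_factored[OF two] by (simp_all only: ac_simps)
  then show "odd_fn ?m"
    unfolding odd_fn_def bar_m conv_kodd_hd_fn counit_eq_kodd_hd_fn by simp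
  show "conv ?p ?m = conv_inv zeta"
    by (simp add: inv conv_kodd_fn_kodd_hd_fn inv_sqrt_series_times_one_plus_X_times_inv_sqrt_series[OF two])
qed

lemma Ccoef_0: "Ccoef 0 q = (of_nat ((2 * q) choose q) :: 'a::field)"
proof -
  have "fact (2 * q) = fact q * fact q * ((2 * q) choose q)"
    using binomial_fact_lemma[of q "2 * q"] by (simp add: mult_2)
  then show ?thesis by (simp add: Ccoef_def)
qed

theorem theorem8p4:
  fixes \<alpha> :: "nat list"
  assumes char_ne_2: "(2::'a::field) \<noteq> 0"
    and comp: "is_comp \<alpha>"
  shows "odd_part (conv_inv (zeta :: nat list \<Rightarrow> 'a)) \<alpha> =
           (if \<alpha> = [] \<or> odd (hd \<alpha>)
            then (-1) ^ length \<alpha> / 2 ^ (2 * (k_odd \<alpha> div 2)) * Ccoef 0 (k_odd \<alpha> div 2)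
            else 0) \<and>
         even_part (conv_inv (zeta :: nat list \<Rightarrow> 'a)) \<alpha> =
           (if even (sum_list \<alpha>)
            then (-1) ^ length \<alpha> / 2 ^ k_odd \<alpha> * Ccoef 0 (k_odd \<alpha> div 2)
            else 0)"
proof -
  have factors: "even_odd_factors (conv_inv (zeta :: nat list \<Rightarrow> 'a))
      = (kodd_fn inv_sqrt_series, kodd_hd_fn ((1 + fps_X) * inv_sqrt_series))"
    by (rule even_odd_factors_conv_inv_zeta[OF char_ne_2])
  have "even (k_odd \<alpha>) \<Longrightarrow> 2 * (k_odd \<alpha> div 2) = k_odd \<alpha>"
    by simp
  then show ?thesis
    using comp unfolding odd_part_def even_part_def factors
    by (simp add: kodd_fn_def kodd_hd_fn_def nth_one_plus_X_times_inv_sqrt_series inv_sqrt_series_nth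
        Ccoef_0 even_sum_list_iff_even_k_odd)
qed

end
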